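(* For any realization of a run of Algorithm 4 (described in the context) under the standing assumption, the number of successful iterations performed before termination satisfies \[ |\mathcal{S}|\ \le\ \bar K_{\mathcal S}(\epsilon_g,\epsilon_H):=\Big\lfloor\bar{\mathcal{C}}_{\mathcal S}\max\{\epsilon_H^{-1},\epsilon_g^{-2}\epsilon_H,\epsilon_H^{-3}\}\Big\rfloor+1, \] where \[ \bar{\mathcal{C}}_{\mathcal S}:=\tfrac{8(f_0-f_{\rm low})}{\eta}\max\Big\{\tfrac{1}{\delta_0^2},\ \tfrac{4L_H^2}{9\gamma_1^2(1-\eta)^2},\ 7+2L_H\Big\}. \]
   Context: Let $f:\mathbb{R}^n\to\mathbb{R}$ with gradient $g=\nabla f$ and Hessian $H=\nabla^2f$; $\|\cdot\|$ is the Euclidean norm, $\lambda_{\min}$ the smallest eigenvalue, $\mathbb{S}^n$ the real symmetric $n\times n$ matrices. Write $f_k=f(x_k)$, $g_k=g(x_k)$, $H_k=H(x_k)$, $m_k(x)=f_k+g_k^T(x-x_k)+\tfrac12(x-x_k)^TH_k(x-x_k)$. Exact arithmetic is assumed. Algorithm 2 (truncated CG; inputs nonzero $g$, $H\in\mathbb{S}^n$, $\epsilon>0$, $\delta>0$, $\zeta\in(0,1)$, flag capCG, and $M\ge\|H\|$): $k_{\max}=\min\{n,\tfrac12\sqrt{\kappa}\ln(4\kappa^{3/2}/\zeta)\}$ with $\kappa=(M+2\epsilon)/\epsilon$ if capCG is true, else $k_{\max}=n$. Set $y_0=0,r_0=g,p_0=-g,j=0$. While $j<k_{\max}$: if $p_j^T(H+2\epsilon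 I)p_j\le\epsilon\|p_j\|^2$, return $s=y_j+\sigma p_j$ with $\sigma\ge0$, $\|s\|=\delta$, flag BND-NEG; set $\alpha_j=\|r_j\|^2/(p_j^T(H+2\epsilon I)p_j)$, $y_{j+1}=y_j+\alpha_jp_j$; if $\|y_{j+1}\|\ge\delta$, return $s=y_j+\sigma p_j$ with $\sigma\ge0$, $\|s\|=\delta$, flag BND-NORM; set $r_{j+1}=r_j+\alpha_j(H+2\epsilon I)p_j$; if $\|r_{j+1}\|\le\tfrac\zeta2\min\{\|g\|,\epsilon\|y_{j+1}\|\}$, return $s=y_{j+1}$, flag INT-RES; set $\beta_{j+1}=\|r_{j+1}\|^2/\|r_j\|^2$, $p_{j+1}=-r_{j+1}+\beta_{j+1}p_j$, $j\leftarrow j+1$. On loop exit return $s=y_j$, flag INT-MAX. Algorithm 3 (minimum eigenvalue oracle, MEO; inputs $g$, $H\in\mathbb{S}^n$, $\epsilon>0$, $\delta>0$, $\xi\in(0,1)$, $M\ge\|H\|$): a possibly randomized procedure that either returns $s=\pm\delta v$ with $\|v\|=1$, $v^THv\le-\epsilon/2$, satisfying $g^Ts\le0$, $s^THs\le-\tfrac12\epsilon\|s\|^2$, $\|s\|=\delta$, or returns an indication that $H\succeq-\epsilon I$. Algorithm 4 (inexact trust-region Newton-CG). Inputs: $\epsilon_g,\epsilon_H>0$; $\gamma_1\in(0,1)$, $\gamma_2\ge1$, $\psi\in(1/\gamma_2,1]$; $x_0$; $\delta_0>0$; $\delta_{\max}\ge\delta_0$; $\eta\in(0,1)$; $\zeta\in(0,1)$;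 $\xi\in[0,1)$; capCG; $M\ge L_g$. For $k=0,1,\dots$: evaluate $g_k,H_k$. If $g_k\ne0$, call Algorithm 2 with $(g_k,H_k,\epsilon_H,\delta_k,\zeta,\text{capCG},M)$ obtaining $s_k^{CG}$ and flag outCG; else set $s_k^{CG}=0$, outCG$=$INT-RES. If outCG$\in\{$BND-NEG, BND-NORM$\}$ or ($\|g_k\|>\epsilon_g$ and outCG$=$INT-RES), set $s_k=s_k^{CG}$. Otherwise call Algorithm 3 with $(g_k,H_k,\epsilon_H,\delta_k,\xi,M)$; if it indicates $H_k\succeq-\epsilon_HI$, return $x_k$ (terminate), else take its output as $s_k$. Set $\rho_k=\frac{f_k-f(x_k+s_k)}{m_k(x_k)-m_k(x_k+s_k)}$. If $\rho_k\ge\eta$: $x_{k+1}=x_k+s_k$ and $\delta_{k+1}=\min\{\gamma_2\delta_k,\delta_{\max}\}$ if $\|s_k\|\ge\psi\delta_k$, else $\delta_{k+1}=\delta_k$. If $\rho_k<\eta$: $x_{k+1}=x_k$, $\delta_{k+1}=\gamma_1\|s_k\|$. $\mathcal{K}$ is the set of indices $k$ such that iteration $k$ is completed without termination (for the given realization); $\mathcal{S}=\{k\in\mathcal{K}:\rho_k\ge\eta\}$. Standing assumption: $\{f_k\}$ is bounded below by some $f_{\rm low}\in\mathbb{R}$, and all segments $[x_k,x_k+s_k]$ lie in an open set on which $f$ is twice continuously differentiable with gradient Lipschitz with constant $L_g>0$ and Hessian Lipschitz with constant $L_H>0$. *)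

theory Defs
  imports "HOL-Analysis.Analysis"
begin

text \<open>Vectors of R^n are real^'n; n = CARD('n). Matrices are real^'n^'n,
  quadratic forms are written p \<bullet> (H *v p), and the matrix (spectral) norm is the
  operator norm onorm ((*v) H).\<close>

datatype cg_flag = BND_NEG | BND_NORM | INT_RES | INT_MAX

definition bnd_step :: "real \<Rightarrow> real^'n \<Rightarrow> real^'n \<Rightarrow> real^'n" where
  "bnd_step delta y p = y + (SOME \<sigma>::real. \<sigma> \<ge> 0 \<and> norm (y + \<sigma> *\<^sub>R p) = delta) *\<^sub>R p"

text \<open>The first argument is a fuel counter
  (initially n, so that fuel + j = n); since k_max \<le> n the loop test j < k_max fails
  at the latest when the fuel is exhausted.\<close>
fun tcg_loop :: "nat \<Rightarrow> nat \<Rightarrow> real^'n^'n \<Rightarrow> real^'n \<Rightarrow> real \<Rightarrow> real \<Rightarrow> real \<Rightarrow> real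
                  \<Rightarrow> real^'n \<Rightarrow> real^'n \<Rightarrow> real^'n \<Rightarrow> (real^'n) \<times> cg_flag" where
  "tcg_loop 0 j H g eps delta zeta kmax y r p = (y, INT_MAX)"
| "tcg_loop (Suc fuel) j H g eps delta zeta kmax y r p =
    (if \<not> (real j < kmax) then (y, INT_MAX)
     else (let A = H + mat (2 * eps); q = p \<bullet> (A *v p) in
       if q \<le> eps * (norm p)\<^sup>2 then (bnd_step delta y p, BND_NEG)
       else (let \<alpha> = (norm r)\<^sup>2 / q; y' = y + \<alpha> *\<^sub>R p in
         if norm y' \<ge> delta then (bnd_step delta y p, BND_NORM)
         else (let r' = r + \<alpha> *\<^sub>R (A *v p) in
           if norm r' \<le> zeta / 2 * min (norm g) (eps * norm y') then (y', INT_RES)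
           else (let \<beta> = (norm r')\<^sup>2 / (norm r)\<^sup>2; p' = - r' + \<beta> *\<^sub>R p in
             tcg_loop fuel (Suc j) H g eps delta zeta kmax y' r' p')))))"

definition tcg_kmax :: "nat \<Rightarrow> real \<Rightarrow> real \<Rightarrow> bool \<Rightarrow> real \<Rightarrow> real" where
  "tcg_kmax n eps zeta capCG M =
     (if capCG then
        (let \<kappa> = (M + 2 * eps) / eps in
          min (real n) (1/2 * sqrt \<kappa> * ln (4 * \<kappa> powr (3/2) / zeta)))
      else real n)"

definition tcg :: "real^'n \<Rightarrow> real^'n^'n \<Rightarrow> real \<Rightarrow> real \<Rightarrow> real \<Rightarrow> bool \<Rightarrow> real
                   \<Rightarrow> (real^'n) \<times> cg_flag" where
  "tcg g H eps delta zeta capCG M =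
     tcg_loop CARD('n) 0 H g eps delta zeta (tcg_kmax CARD('n) eps zeta capCG M) 0 g (- g)"

text \<open>None = indication that
  H \<succeq> -eps I (not required to be correct, since the oracle may be randomized);
  Some s = a returned negative curvature step.\<close>
definition meo_spec :: "real^'n \<Rightarrow> real^'n^'n \<Rightarrow> real \<Rightarrow> real \<Rightarrow> (real^'n) option \<Rightarrow> bool" where
  "meo_spec g H eps delta mo =
     (case mo of None \<Rightarrow> True
      | Some s \<Rightarrow> (\<exists>v. norm v = 1 \<and> v \<bullet> (H *v v) \<le> - eps / 2 \<and>
                       (s = delta *\<^sub>R v \<or> s = - (delta *\<^sub>R v)) \<and>
                       g \<bullet> s \<le> 0 \<and> s \<bullet> (H *v s) \<le> - (1/2) * eps * (norm s)\<^sup>2 \<and>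
                       norm s = delta))"

definition alg4_cg :: "(real^'n \<Rightarrow> real^'n) \<Rightarrow> (real^'n \<Rightarrow> real^'n^'n) \<Rightarrow> real \<Rightarrow> real \<Rightarrow> bool \<Rightarrow> real
                       \<Rightarrow> (nat \<Rightarrow> real^'n) \<Rightarrow> (nat \<Rightarrow> real) \<Rightarrow> nat \<Rightarrow> (real^'n) \<times> cg_flag" where
  "alg4_cg g H epsH zeta capCG M x \<delta> k =
     (if g (x k) \<noteq> 0 then tcg (g (x k)) (H (x k)) epsH (\<delta> k) zeta capCG M else (0, INT_RES))"

definition alg4_calls_meo :: "(real^'n \<Rightarrow> real^'n) \<Rightarrow> (real^'n \<Rightarrow> real^'n^'n) \<Rightarrow> real \<Rightarrow> real \<Rightarrow> real
                    \<Rightarrow> bool \<Rightarrow> real \<Rightarrow> (nat \<Rightarrow> real^'n) \<Rightarrow> (nat \<Rightarrow> real) \<Rightarrow> nat \<Rightarrow> bool" where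
  "alg4_calls_meo g H epsg epsH zeta capCG M x \<delta> k =
     (let out = snd (alg4_cg g H epsH zeta capCG M x \<delta> k) in
      \<not> (out \<in> {BND_NEG, BND_NORM} \<or> (norm (g (x k)) > epsg \<and> out = INT_RES)))"

definition alg4_terminates where
  "alg4_terminates g H epsg epsH zeta capCG M x \<delta> mo k =
     (alg4_calls_meo g H epsg epsH zeta capCG M x \<delta> k \<and> mo k = None)"

definition alg4_K where
  "alg4_K g H epsg epsH zeta capCG M x \<delta> mo =
     {k. \<forall>j\<le>k. \<not> alg4_terminates g H epsg epsH zeta capCG M x \<delta> mo j}"

definition model_decrease :: "real^'n \<Rightarrow> real^'n^'n \<Rightarrow> real^'n \<Rightarrow> real" where
  "model_decrease gk Hk s = - (gk \<bullet> s + 1/2 * (s \<bullet> (Hk *v s)))"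

definition alg4_rho where
  "alg4_rho f g H x s k = (f (x k) - f (x k + s k)) / model_decrease (g (x k)) (H (x k)) (s k)"

text \<open>A realization of a run of Algorithm 4: iterates x, radii \<delta>, steps s, and the
  outputs mo of the MEO (consulted only at iterations where the MEO is called).\<close>
definition alg4_run where
  "alg4_run f g H epsg epsH \<gamma>1 \<gamma>2 \<psi> \<delta>max \<eta> zeta capCG M x \<delta> s mo =
    ((\<forall>k. (\<forall>j<k. \<not> alg4_terminates g H epsg epsH zeta capCG M x \<delta> mo j) \<longrightarrow>
          alg4_calls_meo g H epsg epsH zeta capCG M x \<delta> k \<longrightarrow>
          meo_spec (g (x k)) (H (x k)) epsH (\<delta> k) (mo k)) \<and>
     (\<forall>k \<in> alg4_K g H epsg epsH zeta capCG M x \<delta> mo.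
        s k = (if alg4_calls_meo g H epsg epsH zeta capCG M x \<delta> k then the (mo k)
               else fst (alg4_cg g H epsH zeta capCG M x \<delta> k)) \<and>
        (if alg4_rho f g H x s k \<ge> \<eta> then
           x (Suc k) = x k + s k \<and>
           \<delta> (Suc k) = (if norm (s k) \<ge> \<psi> * \<delta> k then min (\<gamma>2 * \<delta> k) \<delta>max else \<delta> k)
         else x (Suc k) = x k \<and> \<delta> (Suc k) = \<gamma>1 * norm (s k))))"

definition alg4_S where
  "alg4_S f g H epsg epsH \<eta> zeta capCG M x \<delta> s mo =
     {k \<in> alg4_K g H epsg epsH zeta capCG M x \<delta> mo. alg4_rho f g H x s k \<ge> \<eta>}"

end

(*
  Steps ending on the trust-region boundary (truncated CG with BND-NEG or BND-NORM, and the
  negative-curvature steps of the oracle) have length delta_k and decrease the model by at least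
  epsH delta_k^2 / 4.  By the cubic Taylor bound every step longer than 3 (1 - eta) epsH / (2 LH)
  is accepted, so the radius never falls below min delta0 (gamma1 3 (1 - eta) epsH / (2 LH)),
  and an accepted boundary step decreases f by a fixed amount 2 T.  An accepted interior CG step
  (INT-RES) decreases f by eta epsH |s|^2 and leaves a gradient of norm at most
  5/2 epsH |s| + LH |s|^2, so it either decreases f by T or ends at a point whose gradient is at
  most epsg.  Hence the potential f - T [|g| <= epsg] decreases by T at every successful
  iteration; it starts below f_0 and stays above flow - T.
*)
theory Submission
  imports Defs
begin

section \<open>Conjugate gradient iterates\<close>

fun cg_iter :: "real^'n^'n \<Rightarrow> real^'n \<Rightarrow> nat \<Rightarrow> (real^'n) \<times> (real^'n) \<times> (real^'n)" where
  "cg_iter A g 0 = (0, g, -g)"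
| "cg_iter A g (Suc j) = (case cg_iter A g j of (y, r, p) \<Rightarrow>
     (let \<alpha> = (norm r)\<^sup>2 / (p \<bullet> (A *v p)); y' = y + \<alpha> *\<^sub>R p; r' = r + \<alpha> *\<^sub>R (A *v p);
          \<beta> = (norm r')\<^sup>2 / (norm r)\<^sup>2 in (y', r', - r' + \<beta> *\<^sub>R p)))"

definition cg_y :: "real^'n^'n \<Rightarrow> real^'n \<Rightarrow> nat \<Rightarrow> real^'n" where
  "cg_y A g j = fst (cg_iter A g j)"

definition cg_r :: "real^'n^'n \<Rightarrow> real^'n \<Rightarrow> nat \<Rightarrow> real^'n" where
  "cg_r A g j = fst (snd (cg_iter A g j))"

definition cg_p :: "real^'n^'n \<Rightarrow> real^'n \<Rightarrow> nat \<Rightarrow> real^'n" where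
  "cg_p A g j = snd (snd (cg_iter A g j))"

definition cg_alpha :: "real^'n^'n \<Rightarrow> real^'n \<Rightarrow> nat \<Rightarrow> real" where
  "cg_alpha A g j = (norm (cg_r A g j))\<^sup>2 / (cg_p A g j \<bullet> (A *v cg_p A g j))"

lemma cg_0: "cg_y A g 0 = 0" "cg_r A g 0 = g" "cg_p A g 0 = - g"
  by (simp_all add: cg_y_def cg_r_def cg_p_def)

lemma cg_Suc:
  "cg_y A g (Suc j) = cg_y A g j + cg_alpha A g j *\<^sub>R cg_p A g j"
  "cg_r A g (Suc j) = cg_r A g j + cg_alpha A g j *\<^sub>R (A *v cg_p A g j)"
  "cg_p A g (Suc j) = - cg_r A g (Suc j)
     + ((norm (cg_r A g (Suc j)))\<^sup>2 / (norm (cg_r A g j))\<^sup>2) *\<^sub>R cg_p A g j"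
  by (simp_all add: cg_y_def cg_r_def cg_p_def cg_alpha_def Let_def split: prod.splits)

lemma cg_r_eq: "cg_r A g j = g + A *v cg_y A g j"
  by (induction j) (simp_all add: cg_0 cg_Suc matrix_vector_right_distrib matrix_vector_mult_scaleR)

definition cg_continues :: "real^'n^'n \<Rightarrow> real^'n \<Rightarrow> real \<Rightarrow> real \<Rightarrow> real \<Rightarrow> nat \<Rightarrow> bool" where
  "cg_continues A g eps delta zeta l \<longleftrightarrow>
     cg_p A g l \<bullet> (A *v cg_p A g l) > eps * (norm (cg_p A g l))\<^sup>2 \<and>
     norm (cg_y A g (Suc l)) < delta \<and>
     norm (cg_r A g (Suc l)) > zeta / 2 * min (norm g) (eps * norm (cg_y A g (Suc l)))"

definition cg_exit :: "real^'n^'n \<Rightarrow> real^'n \<Rightarrow> real \<Rightarrow> real \<Rightarrow> real \<Rightarrow> nat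
                        \<Rightarrow> (real^'n) \<times> cg_flag \<Rightarrow> bool" where
  "cg_exit A g eps delta zeta i res \<longleftrightarrow>
    (snd res = BND_NEG \<longrightarrow> fst res = bnd_step delta (cg_y A g i) (cg_p A g i) \<and>
        cg_p A g i \<bullet> (A *v cg_p A g i) \<le> eps * (norm (cg_p A g i))\<^sup>2) \<and>
    (snd res = BND_NORM \<longrightarrow> fst res = bnd_step delta (cg_y A g i) (cg_p A g i) \<and>
        cg_p A g i \<bullet> (A *v cg_p A g i) > eps * (norm (cg_p A g i))\<^sup>2 \<and>
        norm (cg_y A g (Suc i)) \<ge> delta) \<and>
    (snd res = INT_RES \<longrightarrow> fst res = cg_y A g (Suc i) \<and>
        cg_p A g i \<bullet> (A *v cg_p A g i) > eps * (norm (cg_p A g i))\<^sup>2 \<and>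
        norm (cg_r A g (Suc i)) \<le> zeta / 2 * min (norm g) (eps * norm (cg_y A g (Suc i))))"

lemma tcg_loop_exit:
  assumes "A = H + mat (2 * eps)"
  shows "\<exists>i\<ge>j. (\<forall>l. j \<le> l \<and> l < i \<longrightarrow> cg_continues A g eps delta zeta l) \<and>
     cg_exit A g eps delta zeta i
       (tcg_loop fuel j H g eps delta zeta kmax (cg_y A g j) (cg_r A g j) (cg_p A g j))"
proof (induction fuel arbitrary: j)
  case 0
  show ?case by (intro exI[of _ j]) (auto simp: cg_exit_def)
next
  case (Suc fuel)
  let ?res = "tcg_loop (Suc fuel) j H g eps delta zeta kmax (cg_y A g j) (cg_r A g j) (cg_p A g j)"
  have unfold: "?res = (if \<not> real j < kmax then (cg_y A g j, INT_MAX)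
     else if cg_p A g j \<bullet> (A *v cg_p A g j) \<le> eps * (norm (cg_p A g j))\<^sup>2
       then (bnd_step delta (cg_y A g j) (cg_p A g j), BND_NEG)
     else if norm (cg_y A g (Suc j)) \<ge> delta
       then (bnd_step delta (cg_y A g j) (cg_p A g j), BND_NORM)
     else if norm (cg_r A g (Suc j)) \<le> zeta / 2 * min (norm g) (eps * norm (cg_y A g (Suc j)))
       then (cg_y A g (Suc j), INT_RES)
     else tcg_loop fuel (Suc j) H g eps delta zeta kmax
            (cg_y A g (Suc j)) (cg_r A g (Suc j)) (cg_p A g (Suc j)))"
    by (simp only: tcg_loop.simps Let_def assms[symmetric]
        cg_Suc(1,2)[unfolded cg_alpha_def, symmetric] cg_Suc(3)[symmetric])
  show ?case
  proof (cases "real j < kmax \<and> cg_continues A g eps delta zeta j")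
    case True
    then have "?res = tcg_loop fuel (Suc j) H g eps delta zeta kmax
                        (cg_y A g (Suc j)) (cg_r A g (Suc j)) (cg_p A g (Suc j))"
      unfolding unfold cg_continues_def by auto
    moreover obtain i where "i \<ge> Suc j"
      and later: "\<forall>l. Suc j \<le> l \<and> l < i \<longrightarrow> cg_continues A g eps delta zeta l"
      and "cg_exit A g eps delta zeta i
        (tcg_loop fuel (Suc j) H g eps delta zeta kmax (cg_y A g (Suc j)) (cg_r A g (Suc j)) (cg_p A g (Suc j)))"
      using Suc.IH by blast
    moreover have "\<forall>l. j \<le> l \<and> l < i \<longrightarrow> cg_continues A g eps delta zeta l"
      using True later by (metis Suc_leI le_neq_implies_less)
    ultimately show ?thesis by (intro exI[of _ i]) auto
  next
    case False
    then show ?thesis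
      unfolding unfold cg_continues_def by (intro exI[of _ j]) (auto simp: cg_exit_def)
  qed
qed

(* At m = 0 the truncated m - 1 is harmless: take c = 0. *)
lemma cg_r_in_span: "\<exists>c. cg_r A g m = c *\<^sub>R cg_p A g (m - 1) - cg_p A g m"
proof (cases m)
  case 0
  then show ?thesis by (intro exI[of _ 0]) (simp add: cg_0)
next
  case (Suc l)
  then show ?thesis by (auto simp: cg_Suc(3)[of A g l])
qed

definition cg_quad :: "real^'n^'n \<Rightarrow> real^'n \<Rightarrow> real^'n \<Rightarrow> real" where
  "cg_quad A g y = g \<bullet> y + 1/2 * (y \<bullet> (A *v y))"

lemma cg_quad_line:
  assumes "\<And>u v. (A *v u) \<bullet> v = u \<bullet> (A *v v)"
  shows "cg_quad A g (y + t *\<^sub>R p)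
    = cg_quad A g y + t * ((g + A *v y) \<bullet> p) + t\<^sup>2 / 2 * (p \<bullet> (A *v p))"
proof -
  have "p \<bullet> (A *v y) = y \<bullet> (A *v p)" using assms[of y p] by (simp add: inner_commute)
  then show ?thesis
    by (simp add: cg_quad_def matrix_vector_right_distrib matrix_vector_mult_scaleR
        inner_add_left inner_add_right assms power2_eq_square algebra_simps)
qed

lemma power2_norm_add_scaleR:
  fixes y p :: "'a::real_inner"
  shows "(norm (y + t *\<^sub>R p))\<^sup>2 = (norm y)\<^sup>2 + 2 * t * (y \<bullet> p) + t\<^sup>2 * (norm p)\<^sup>2"
proof -
  have "(norm (y + t *\<^sub>R p))\<^sup>2 = y \<bullet> y + 2 * t * (y \<bullet> p) + t * t * (p \<bullet> p)"
    by (simp add: power2_norm_eq_inner inner_add_left inner_add_right inner_commute[of p y] algebra_simps)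
  then show ?thesis by (simp only: power2_norm_eq_inner[symmetric] power2_eq_square)
qed

lemma boundary_crossing_le:
  fixes y p :: "'a::real_normed_vector"
  assumes y: "norm y < delta" and \<sigma>: "norm (y + \<sigma> *\<^sub>R p) = delta"
    and a: "0 < a" "delta \<le> norm (y + a *\<^sub>R p)"
  shows "\<sigma> \<le> a"
proof (rule ccontr)
  assume "\<not> \<sigma> \<le> a"
  define \<theta> where "\<theta> = a / \<sigma>"
  have \<theta>: "0 < \<theta>" "\<theta> < 1" using \<open>\<not> \<sigma> \<le> a\<close> a by (auto simp: \<theta>_def)
  have "y + a *\<^sub>R p = (1 - \<theta>) *\<^sub>R y + \<theta> *\<^sub>R (y + \<sigma> *\<^sub>R p)"
    using \<open>\<not> \<sigma> \<le> a\<close> a by (simp add: \<theta>_def algebra_simps)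
  then have "norm (y + a *\<^sub>R p) \<le> (1 - \<theta>) * norm y + \<theta> * delta"
    using \<theta> \<sigma> norm_triangle_ineq[of "(1 - \<theta>) *\<^sub>R y" "\<theta> *\<^sub>R (y + \<sigma> *\<^sub>R p)"] by simp
  also have "\<dots> < delta"
    using mult_strict_left_mono[OF y, of "1 - \<theta>"] \<theta> by (simp add: algebra_simps)
  finally show False using a by simp
qed

lemma bnd_step_exists:
  fixes y p :: "real^'n"
  assumes y: "norm y < delta" and p: "p \<noteq> 0"
  obtains \<sigma> where "\<sigma> \<ge> 0" "bnd_step delta y p = y + \<sigma> *\<^sub>R p" "norm (y + \<sigma> *\<^sub>R p) = delta"
proof -
  define b where "b = (delta + norm y) / norm p"
  have "delta + norm y \<ge> 0" using y norm_ge_zero[of y] by linarith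
  then have b: "b \<ge> 0" "norm (b *\<^sub>R p) = delta + norm y"
    using p by (auto simp: b_def)
  have "norm (b *\<^sub>R p) \<le> norm (y + b *\<^sub>R p) + norm y"
    using norm_triangle_ineq4[of "y + b *\<^sub>R p" y] by simp
  then have "delta \<le> norm (y + b *\<^sub>R p)" using b by simp
  moreover have "continuous_on {0..b} (\<lambda>t. norm (y + t *\<^sub>R p))"
    by (intro continuous_intros)
  ultimately have "\<exists>\<sigma>. \<sigma> \<ge> 0 \<and> norm (y + \<sigma> *\<^sub>R p) = delta"
    using IVT'[of "\<lambda>t. norm (y + t *\<^sub>R p)" 0 delta b] y b by auto
  from someI_ex[OF this] show ?thesis
    by (intro that[of "SOME \<sigma>. \<sigma> \<ge> 0 \<and> norm (y + \<sigma> *\<^sub>R p) = delta"]) (auto simp: bnd_step_def)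
qed

locale cg_run =
  fixes A :: "real^'n^'n" and g :: "real^'n" and eps delta zeta :: real and i :: nat
  assumes symmetric: "\<And>u v. (A *v u) \<bullet> v = u \<bullet> (A *v v)"
    and g_nonzero: "g \<noteq> 0" and eps_nonneg: "eps \<ge> 0" and zeta_nonneg: "zeta \<ge> 0"
    and delta_pos: "delta > 0"
    and continues: "\<And>l. l < i \<Longrightarrow> cg_continues A g eps delta zeta l"
begin

abbreviation "Y \<equiv> cg_y A g"
abbreviation "R \<equiv> cg_r A g"
abbreviation "P \<equiv> cg_p A g"
abbreviation "\<alpha> \<equiv> cg_alpha A g"
abbreviation "q \<equiv> cg_quad A g"

lemma r_nonzero: "l \<le> i \<Longrightarrow> R l \<noteq> 0"
proof (cases l)
  case 0
  then show ?thesis using g_nonzero by (simp add: cg_0)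
next
  case (Suc m)
  assume "l \<le> i"
  then have "norm (R l) > zeta / 2 * min (norm g) (eps * norm (Y l))"
    using continues[of m] Suc by (simp add: cg_continues_def)
  moreover have "zeta / 2 * min (norm g) (eps * norm (Y l)) \<ge> 0"
    using zeta_nonneg eps_nonneg by simp
  ultimately show ?thesis by auto
qed

lemma curvature_pos: "l < i \<Longrightarrow> P l \<bullet> (A *v P l) > 0"
  using continues[of l] mult_nonneg_nonneg[OF eps_nonneg, of "(norm (P l))\<^sup>2"]
  by (simp add: cg_continues_def)

lemma alpha_pos: "l < i \<Longrightarrow> \<alpha> l > 0"
  using curvature_pos[of l] r_nonzero[of l] by (simp add: cg_alpha_def)

lemma alpha_curvature: "l < i \<Longrightarrow> \<alpha> l * (P l \<bullet> (A *v P l)) = (norm (R l))\<^sup>2"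
  using curvature_pos[of l] by (simp add: cg_alpha_def)

definition cg_orthogonal :: "nat \<Rightarrow> bool" where
  "cg_orthogonal l \<longleftrightarrow> (\<forall>m<l. R l \<bullet> P m = 0 \<and> P l \<bullet> (A *v P m) = 0)"

lemma r_inner_p_self:
  assumes "cg_orthogonal l"
  shows "R l \<bullet> P l = - (norm (R l))\<^sup>2"
proof (cases l)
  case 0
  then show ?thesis by (simp add: cg_0 power2_norm_eq_inner)
next
  case (Suc m)
  then have "R l \<bullet> P m = 0" using assms by (simp add: cg_orthogonal_def)
  then show ?thesis
    using Suc by (simp add: cg_Suc(3)[of A g m] inner_diff_right power2_norm_eq_inner)
qed

lemma r_Suc_orth_p:
  assumes l: "l < i" and orth: "cg_orthogonal l" and m: "m \<le> l"
  shows "R (Suc l) \<bullet> P m = 0"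
proof (cases "m = l")
  case True
  have "R (Suc l) \<bullet> P l = R l \<bullet> P l + \<alpha> l * (P l \<bullet> (A *v P l))"
    by (simp add: cg_Suc inner_add_left symmetric)
  then show ?thesis
    using True r_inner_p_self[OF orth] alpha_curvature[OF l] by simp
next
  case False
  then have "R l \<bullet> P m = 0" "(A *v P l) \<bullet> P m = 0"
    using orth m symmetric by (auto simp: cg_orthogonal_def)
  then show ?thesis by (simp add: cg_Suc inner_add_left)
qed

lemma r_Suc_orth_r:
  assumes "l < i" "cg_orthogonal l" "m \<le> l"
  shows "R (Suc l) \<bullet> R m = 0"
proof -
  obtain c where "R m = c *\<^sub>R P (m - 1) - P m" using cg_r_in_span by blast
  then show ?thesis using r_Suc_orth_p[OF assms] r_Suc_orth_p[OF assms(1,2), of "m - 1"] assms(3)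
    by (simp add: inner_diff_right)
qed

lemma p_Suc_conjugate:
  assumes l: "l < i" and orth: "cg_orthogonal l" and m: "m \<le> l"
  shows "P (Suc l) \<bullet> (A *v P m) = 0"
proof -
  define \<beta> where "\<beta> = (norm (R (Suc l)))\<^sup>2 / (norm (R l))\<^sup>2"
  have mi: "m < i" using l m by simp
  have "A *v P m = (1 / \<alpha> m) *\<^sub>R (R (Suc m) - R m)"
    using alpha_pos[OF mi] by (simp add: cg_Suc)
  then have RAP: "R (Suc l) \<bullet> (A *v P m) = (R (Suc l) \<bullet> R (Suc m) - R (Suc l) \<bullet> R m) / \<alpha> m"
    by (simp add: inner_diff_right)
  have "P (Suc l) \<bullet> (A *v P m) = \<beta> * (P l \<bullet> (A *v P m)) - R (Suc l) \<bullet> (A *v P m)"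
    by (simp add: cg_Suc(3)[of A g l] \<beta>_def inner_diff_left)
  also have "\<dots> = 0"
  proof (cases "m = l")
    case True
    have "R (Suc l) \<bullet> R l = 0" by (rule r_Suc_orth_r[OF l orth order.refl])
    moreover have "\<beta> * (P l \<bullet> (A *v P l)) = (norm (R (Suc l)))\<^sup>2 / \<alpha> l"
      using alpha_curvature[OF l] alpha_pos[OF l] r_nonzero[of l] l
      by (simp add: \<beta>_def field_simps)
    ultimately show ?thesis using RAP True by (simp add: power2_norm_eq_inner)
  next
    case False
    then have "R (Suc l) \<bullet> R (Suc m) = 0" "R (Suc l) \<bullet> R m = 0" "P l \<bullet> (A *v P m) = 0"
      using r_Suc_orth_r[OF l orth] orth m by (auto simp: cg_orthogonal_def)
    then show ?thesis using RAP by simp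
  qed
  finally show ?thesis .
qed

lemma orthogonal: "l \<le> i \<Longrightarrow> cg_orthogonal l"
proof (induction l)
  case 0
  then show ?case by (simp add: cg_orthogonal_def)
next
  case (Suc l)
  then show ?case
    using r_Suc_orth_p[of l] p_Suc_conjugate[of l]
    by (auto simp: cg_orthogonal_def less_Suc_eq_le)
qed

lemma r_orth_p: "m < l \<Longrightarrow> l \<le> i \<Longrightarrow> R l \<bullet> P m = 0"
  using orthogonal by (simp add: cg_orthogonal_def)

lemma r_inner_p: "l \<le> i \<Longrightarrow> R l \<bullet> P l = - (norm (R l))\<^sup>2"
  using orthogonal r_inner_p_self by blast

lemma p_nonzero: "l \<le> i \<Longrightarrow> P l \<noteq> 0"
  using r_inner_p[of l] r_nonzero[of l] by auto

lemma y_norm_less: "l \<le> i \<Longrightarrow> norm (Y l) < delta"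
proof (cases l)
  case 0
  then show ?thesis using delta_pos by (simp add: cg_0)
next
  case (Suc m)
  assume "l \<le> i"
  then show ?thesis using continues[of m] Suc by (simp add: cg_continues_def)
qed

lemma y_orth_r: "l \<le> k \<Longrightarrow> k \<le> i \<Longrightarrow> Y l \<bullet> R k = 0"
proof (induction l)
  case 0
  then show ?case by (simp add: cg_0)
next
  case (Suc l)
  then have "P l \<bullet> R k = 0" using r_orth_p[of l k] by (simp add: inner_commute)
  then show ?case using Suc by (simp add: cg_Suc inner_add_left)
qed

lemma y_inner_p_nonneg: "l \<le> i \<Longrightarrow> Y l \<bullet> P l \<ge> 0"
proof (induction l)
  case 0
  then show ?case by (simp add: cg_0)
next
  case (Suc l)
  have "Y (Suc l) \<bullet> P l = Y l \<bullet> P l + \<alpha> l * (norm (P l))\<^sup>2"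
    by (simp add: cg_Suc inner_add_left power2_norm_eq_inner)
  moreover have "Y (Suc l) \<bullet> R (Suc l) = 0" using y_orth_r Suc.prems by simp
  ultimately have "Y (Suc l) \<bullet> P (Suc l)
      = ((norm (R (Suc l)))\<^sup>2 / (norm (R l))\<^sup>2) * (Y l \<bullet> P l + \<alpha> l * (norm (P l))\<^sup>2)"
    by (simp add: cg_Suc(3)[of A g l] inner_diff_right)
  moreover have "Y l \<bullet> P l \<ge> 0" "\<alpha> l > 0" using Suc alpha_pos by auto
  ultimately show ?case by simp
qed

lemma quad_along_p:
  "l \<le> i \<Longrightarrow> q (Y l + t *\<^sub>R P l) = q (Y l) - t * (norm (R l))\<^sup>2 + t\<^sup>2 / 2 * (P l \<bullet> (A *v P l))"
  using cg_quad_line[OF symmetric] r_inner_p cg_r_eq[of A g l, symmetric] by simp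

lemma quad_Suc:
  assumes "l \<le> i" "P l \<bullet> (A *v P l) > 0"
  shows "q (Y (Suc l)) = q (Y l) - \<alpha> l * (norm (R l))\<^sup>2 / 2"
proof -
  have "\<alpha> l * (P l \<bullet> (A *v P l)) = (norm (R l))\<^sup>2" using assms(2) by (simp add: cg_alpha_def)
  then have "(\<alpha> l)\<^sup>2 / 2 * (P l \<bullet> (A *v P l)) = \<alpha> l * (norm (R l))\<^sup>2 / 2"
    by (simp add: power2_eq_square mult.assoc)
  then show ?thesis
    using quad_along_p[OF assms(1), of "\<alpha> l"] by (simp add: cg_Suc)
qed

lemma quad_nonpos: "l \<le> i \<Longrightarrow> q (Y l) \<le> 0"
proof (induction l)
  case 0
  then show ?case by (simp add: cg_0 cg_quad_def)
next
  case (Suc l)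
  then have "q (Y (Suc l)) = q (Y l) - \<alpha> l * (norm (R l))\<^sup>2 / 2" "\<alpha> l > 0"
    using quad_Suc curvature_pos alpha_pos by auto
  moreover have "\<alpha> l * (norm (R l))\<^sup>2 \<ge> 0" using \<open>\<alpha> l > 0\<close> by simp
  moreover have "q (Y l) \<le> 0" using Suc by simp
  ultimately show ?case by linarith
qed

lemma quad_interior_neg:
  assumes "P i \<bullet> (A *v P i) > 0"
  shows "q (Y (Suc i)) < 0"
proof -
  have "\<alpha> i > 0" using assms r_nonzero[of i] by (simp add: cg_alpha_def)
  moreover have "(norm (R i))\<^sup>2 > 0" using r_nonzero[of i] by simp
  ultimately have "\<alpha> i * (norm (R i))\<^sup>2 > 0" by simp
  then show ?thesis using quad_Suc[OF order.refl assms] quad_nonpos[of i] by simp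
qed

lemma quad_boundary_norm:
  assumes c: "P i \<bullet> (A *v P i) > eps * (norm (P i))\<^sup>2" and y: "norm (Y (Suc i)) \<ge> delta"
  shows "q (bnd_step delta (Y i) (P i)) \<le> 0" "norm (bnd_step delta (Y i) (P i)) = delta"
proof -
  obtain \<sigma> where \<sigma>: "\<sigma> \<ge> 0" "bnd_step delta (Y i) (P i) = Y i + \<sigma> *\<^sub>R P i"
    "norm (Y i + \<sigma> *\<^sub>R P i) = delta"
    using bnd_step_exists[OF y_norm_less p_nonzero] by blast
  have cp: "P i \<bullet> (A *v P i) > 0"
    using c mult_nonneg_nonneg[OF eps_nonneg, of "(norm (P i))\<^sup>2"] by simp
  then have "\<alpha> i > 0" using r_nonzero[of i] by (simp add: cg_alpha_def)
  then have "\<sigma> \<le> \<alpha> i"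
    using boundary_crossing_le[OF y_norm_less[of i] \<sigma>(3)] y by (simp add: cg_Suc)
  then have "\<sigma> * (P i \<bullet> (A *v P i)) \<le> \<alpha> i * (P i \<bullet> (A *v P i))"
    using cp by (simp add: mult_right_mono)
  also have "\<dots> = (norm (R i))\<^sup>2" using cp by (simp add: cg_alpha_def)
  finally have "\<sigma> * (\<sigma> * (P i \<bullet> (A *v P i))) \<le> \<sigma> * (norm (R i))\<^sup>2"
    using \<sigma>(1) by (rule mult_left_mono)
  moreover have "\<sigma> * (norm (R i))\<^sup>2 \<ge> 0" using \<sigma>(1) by simp
  ultimately show "q (bnd_step delta (Y i) (P i)) \<le> 0"
    using quad_along_p[of i \<sigma>] quad_nonpos[of i] \<sigma>(2) by (simp add: power2_eq_square)
  show "norm (bnd_step delta (Y i) (P i)) = delta" using \<sigma> by simp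
qed

lemma quad_boundary_neg:
  assumes c: "P i \<bullet> (A *v P i) \<le> eps * (norm (P i))\<^sup>2"
  shows "q (bnd_step delta (Y i) (P i)) \<le> eps * delta\<^sup>2 / 2" "norm (bnd_step delta (Y i) (P i)) = delta"
proof -
  obtain \<sigma> where \<sigma>: "\<sigma> \<ge> 0" "bnd_step delta (Y i) (P i) = Y i + \<sigma> *\<^sub>R P i"
    "norm (Y i + \<sigma> *\<^sub>R P i) = delta"
    using bnd_step_exists[OF y_norm_less p_nonzero] by blast
  have "delta\<^sup>2 = (norm (Y i))\<^sup>2 + 2 * \<sigma> * (Y i \<bullet> P i) + \<sigma>\<^sup>2 * (norm (P i))\<^sup>2"
    using power2_norm_add_scaleR[of "Y i" \<sigma> "P i"] \<sigma>(3) by simp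
  moreover have "2 * \<sigma> * (Y i \<bullet> P i) \<ge> 0" using \<sigma>(1) y_inner_p_nonneg[of i] by simp
  ultimately have "\<sigma>\<^sup>2 * (norm (P i))\<^sup>2 \<le> delta\<^sup>2" using zero_le_power2[of "norm (Y i)"] by linarith
  have "\<sigma>\<^sup>2 * (P i \<bullet> (A *v P i)) \<le> \<sigma>\<^sup>2 * (eps * (norm (P i))\<^sup>2)"
    using c by (simp add: mult_left_mono)
  also have "\<dots> = eps * (\<sigma>\<^sup>2 * (norm (P i))\<^sup>2)" by simp
  also have "\<dots> \<le> eps * delta\<^sup>2"
    using \<open>\<sigma>\<^sup>2 * (norm (P i))\<^sup>2 \<le> delta\<^sup>2\<close> eps_nonneg by (rule mult_left_mono)
  finally have "\<sigma>\<^sup>2 / 2 * (P i \<bullet> (A *v P i)) \<le> eps * delta\<^sup>2 / 2" by simp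
  moreover have "\<sigma> * (norm (R i))\<^sup>2 \<ge> 0" using \<sigma>(1) by simp
  ultimately show "q (bnd_step delta (Y i) (P i)) \<le> eps * delta\<^sup>2 / 2"
    using quad_along_p[of i \<sigma>] quad_nonpos[of i] \<sigma>(2) by simp
  show "norm (bnd_step delta (Y i) (P i)) = delta" using \<sigma> by simp
qed

end

section \<open>Truncated CG steps and oracle steps\<close>

lemma mat_mult_vector: "mat c *v v = c *\<^sub>R (v::real^'n)"
  by (simp add: vec_eq_iff matrix_vector_mult_def mat_def if_distrib[of "\<lambda>a. a * _"] cong: if_cong)

lemma model_decrease_eq_shifted_quad:
  "model_decrease g Hm s = eps * (norm s)\<^sup>2 - cg_quad (Hm + mat (2 * eps)) g s"
  by (simp add: model_decrease_def cg_quad_def matrix_vector_mult_add_rdistrib mat_mult_vector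
      inner_add_right power2_norm_eq_inner algebra_simps)

locale tcg_input =
  fixes g :: "real^'n" and Hm :: "real^'n^'n" and eps delta zeta :: real
  assumes symmetric: "\<And>u v. (Hm *v u) \<bullet> v = u \<bullet> (Hm *v v)"
    and g_nonzero: "g \<noteq> 0" and eps_pos: "eps > 0" and delta_pos: "delta > 0"
    and zeta: "0 \<le> zeta" "zeta \<le> 1"
begin

abbreviation "A \<equiv> Hm + mat (2 * eps)"

lemma tcg_exit:
  obtains i where "cg_run A g eps delta zeta i"
    "cg_exit A g eps delta zeta i (tcg g Hm eps delta zeta capCG M)"
proof -
  obtain i where "\<forall>l<i. cg_continues A g eps delta zeta l"
    "cg_exit A g eps delta zeta i (tcg g Hm eps delta zeta capCG M)"
    using tcg_loop_exit[of A Hm eps 0 g delta zeta "CARD('n)"] by (auto simp: tcg_def cg_0)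
  moreover have "(A *v u) \<bullet> v = u \<bullet> (A *v v)" for u v
    using symmetric[of u v] by (simp add: matrix_vector_mult_add_rdistrib mat_mult_vector
        inner_add_left inner_add_right inner_commute)
  ultimately show ?thesis
    using g_nonzero eps_pos delta_pos zeta by (intro that) (unfold_locales, auto)
qed

lemma tcg_boundary:
  assumes "snd (tcg g Hm eps delta zeta capCG M) \<in> {BND_NEG, BND_NORM}"
  defines "s \<equiv> fst (tcg g Hm eps delta zeta capCG M)"
  shows "norm s = delta" "eps / 2 * delta\<^sup>2 \<le> model_decrease g Hm s"
proof -
  obtain i where run: "cg_run A g eps delta zeta i"
    and exit: "cg_exit A g eps delta zeta i (tcg g Hm eps delta zeta capCG M)"
    by (rule tcg_exit)
  interpret cg_run A g eps delta zeta i by (rule run)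
  have "norm s = delta \<and> q s \<le> eps * delta\<^sup>2 / 2"
    using assms exit quad_boundary_neg quad_boundary_norm eps_pos
    by (auto simp: cg_exit_def s_def intro: order_trans[of _ 0])
  then show "norm s = delta" "eps / 2 * delta\<^sup>2 \<le> model_decrease g Hm s"
    by (auto simp: model_decrease_eq_shifted_quad[of _ _ _ eps])
qed

lemma tcg_interior:
  assumes "snd (tcg g Hm eps delta zeta capCG M) = INT_RES"
  defines "s \<equiv> fst (tcg g Hm eps delta zeta capCG M)"
  shows "eps * (norm s)\<^sup>2 < model_decrease g Hm s"
    and "norm (g + Hm *v s + (2 * eps) *\<^sub>R s) \<le> eps / 2 * norm s"
proof -
  obtain i where run: "cg_run A g eps delta zeta i"
    and exit: "cg_exit A g eps delta zeta i (tcg g Hm eps delta zeta capCG M)"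
    by (rule tcg_exit)
  interpret cg_run A g eps delta zeta i by (rule run)
  have s: "s = Y (Suc i)" and curv: "P i \<bullet> (A *v P i) > eps * (norm (P i))\<^sup>2"
    and res: "norm (R (Suc i)) \<le> zeta / 2 * min (norm g) (eps * norm (Y (Suc i)))"
    using assms exit by (auto simp: cg_exit_def s_def)
  have "eps * (norm (P i))\<^sup>2 \<ge> 0" using eps_pos by simp
  then have "P i \<bullet> (A *v P i) > 0" using curv by linarith
  then show "eps * (norm s)\<^sup>2 < model_decrease g Hm s"
    using quad_interior_neg s by (simp add: model_decrease_eq_shifted_quad[of _ _ _ eps])
  have "R (Suc i) = g + Hm *v s + (2 * eps) *\<^sub>R s"
    using cg_r_eq[of A g "Suc i"] s by (simp add: matrix_vector_mult_add_rdistrib mat_mult_vector)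
  moreover have "zeta * min (norm g) (eps * norm s) \<le> zeta * (eps * norm s)"
    using zeta by (simp add: mult_left_mono)
  moreover have "zeta * (eps * norm s) \<le> eps * norm s"
    using zeta eps_pos by (simp add: mult_left_le_one_le)
  ultimately show "norm (g + Hm *v s + (2 * eps) *\<^sub>R s) \<le> eps / 2 * norm s"
    using res s by simp
qed

end

lemma meo_step:
  assumes "meo_spec g Hm eps delta (Some s)"
  shows "norm s = delta" "eps / 4 * (norm s)\<^sup>2 \<le> model_decrease g Hm s"
  using assms by (auto simp: meo_spec_def model_decrease_def)

section \<open>Functions with Lipschitz continuous Hessian\<close>

lemma has_real_derivative_along_line:
  fixes F :: "'a::real_inner \<Rightarrow> real"
  assumes "(F has_derivative (\<lambda>h. c \<bullet> h)) (at (x + t *\<^sub>R s))"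
  shows "((\<lambda>t. F (x + t *\<^sub>R s)) has_real_derivative (c \<bullet> s)) (at t)"
proof -
  have "((\<lambda>t. x + t *\<^sub>R s) has_derivative (\<lambda>h. h *\<^sub>R s)) (at t)"
    by (auto intro!: derivative_eq_intros)
  from has_derivative_compose[OF this assms]
  have "((\<lambda>t. F (x + t *\<^sub>R s)) has_derivative (\<lambda>h. c \<bullet> (h *\<^sub>R s))) (at t)" .
  moreover have "(\<lambda>h. c \<bullet> (h *\<^sub>R s)) = (*) (c \<bullet> s)" by (auto simp: fun_eq_iff)
  ultimately show ?thesis by (simp add: has_field_derivative_def)
qed

lemma has_real_derivative_inner_along_line:
  fixes G :: "real^'n \<Rightarrow> real^'m"
  assumes "(G has_derivative (\<lambda>h. M *v h)) (at (x + t *\<^sub>R s))"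
  shows "((\<lambda>t. w \<bullet> G (x + t *\<^sub>R s)) has_real_derivative (w \<bullet> (M *v s))) (at t)"
proof -
  have "((\<lambda>t. x + t *\<^sub>R s) has_derivative (\<lambda>h. h *\<^sub>R s)) (at t)"
    by (auto intro!: derivative_eq_intros)
  from has_derivative_inner_right[OF has_derivative_compose[OF this assms], of w]
  have "((\<lambda>t. w \<bullet> G (x + t *\<^sub>R s)) has_derivative (\<lambda>h. w \<bullet> (M *v (h *\<^sub>R s)))) (at t)" .
  moreover have "(\<lambda>h. w \<bullet> (M *v (h *\<^sub>R s))) = (*) (w \<bullet> (M *v s))"
    by (auto simp: fun_eq_iff matrix_vector_mult_scaleR)
  ultimately show ?thesis by (simp add: has_field_derivative_def)
qed

lemma segment_point_in_closed_segment: "0 \<le> t \<Longrightarrow> t \<le> 1 \<Longrightarrow> x + t *\<^sub>R s \<in> closed_segment x (x + s)"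
  unfolding closed_segment_def by (rule CollectI, rule exI[of _ t]) (simp add: algebra_simps)

lemma norm_scaleR_add_scaleR_le:
  assumes "0 \<le> a" "a \<le> 1" "0 \<le> b" "b \<le> 1"
  shows "norm (a *\<^sub>R u + b *\<^sub>R v) \<le> norm u + norm v"
proof -
  have "norm (a *\<^sub>R u + b *\<^sub>R v) \<le> a * norm u + b * norm v"
    using norm_triangle_ineq[of "a *\<^sub>R u" "b *\<^sub>R v"] assms by simp
  also have "\<dots> \<le> norm u + norm v"
    using assms by (intro add_mono) (simp_all add: mult_left_le_one_le)
  finally show ?thesis .
qed

lemma zero_if_abs_le_linear:
  fixes D K r :: real
  assumes r: "r > 0" and le: "\<And>t. 0 < t \<Longrightarrow> t < r \<Longrightarrow> \<bar>D\<bar> \<le> K * t"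
  shows "D = 0"
proof -
  have "\<bar>D\<bar> \<le> 0 + e" if e: "e > 0" for e
  proof -
    define t where "t = min (r / 2) (e / (\<bar>K\<bar> + 1))"
    have t: "0 < t" "t < r" using r e by (auto simp: t_def)
    have "\<bar>K\<bar> * t \<le> \<bar>K\<bar> * (e / (\<bar>K\<bar> + 1))" by (intro mult_left_mono) (auto simp: t_def)
    also have "\<dots> \<le> e" using e by (simp add: field_simps)
    moreover have "K * t \<le> \<bar>K\<bar> * t" using t by (simp add: mult_right_mono)
    ultimately show ?thesis using le[OF t] by simp
  qed
  then show ?thesis by (metis abs_le_zero_iff field_le_epsilon)
qed

locale lipschitz_hessian =
  fixes f :: "real^'n \<Rightarrow> real" and g :: "real^'n \<Rightarrow> real^'n" and H :: "real^'n \<Rightarrow> real^'n^'n"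
    and U :: "(real^'n) set" and LH :: real
  assumes open_U: "open U"
    and gradient: "\<And>y. y \<in> U \<Longrightarrow> (f has_derivative (\<lambda>h. g y \<bullet> h)) (at y)"
    and hessian: "\<And>y. y \<in> U \<Longrightarrow> (g has_derivative (\<lambda>h. H y *v h)) (at y)"
    and LH_nonneg: "LH \<ge> 0"
    and H_lipschitz: "\<And>y z. y \<in> U \<Longrightarrow> z \<in> U \<Longrightarrow> onorm (\<lambda>v. (H y - H z) *v v) \<le> LH * norm (y - z)"
begin

lemma H_lipschitz_inner:
  assumes "y \<in> U" "z \<in> U"
  shows "\<bar>u \<bullet> (H y *v v) - u \<bullet> (H z *v v)\<bar> \<le> LH * norm (y - z) * norm u * norm v"
proof -
  have "norm ((H y - H z) *v v) \<le> onorm (\<lambda>v. (H y - H z) *v v) * norm v"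
    by (rule onorm[OF matrix_vector_mul_bounded_linear])
  also have "\<dots> \<le> LH * norm (y - z) * norm v"
    using H_lipschitz[OF assms] by (simp add: mult_right_mono)
  finally have "norm u * norm ((H y - H z) *v v) \<le> norm u * (LH * norm (y - z) * norm v)"
    by (simp add: mult_left_mono)
  with Cauchy_Schwarz_ineq2[of u "(H y - H z) *v v"] show ?thesis
    by (simp add: matrix_vector_mult_diff_rdistrib inner_diff_right algebra_simps)
qed

lemma cubic_upper_bound:
  assumes seg: "closed_segment x (x + s) \<subseteq> U"
  shows "f (x + s) \<le> f x + g x \<bullet> s + 1/2 * (s \<bullet> (H x *v s)) + LH / 6 * norm s ^ 3"
proof -
  have inU: "\<And>t. 0 \<le> t \<Longrightarrow> t \<le> 1 \<Longrightarrow> x + t *\<^sub>R s \<in> U"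
    using seg segment_point_in_closed_segment by blast
  define p1 where "p1 t = s \<bullet> g (x + t *\<^sub>R s)" for t
  define p2 where "p2 t = s \<bullet> (H (x + t *\<^sub>R s) *v s)" for t
  define c where "c = LH * norm s ^ 3 / 6"
  define \<phi> where "\<phi> t = f (x + t *\<^sub>R s) - f x - t * p1 0 - t\<^sup>2 / 2 * p2 0 - c * t ^ 3" for t
  define \<phi>' where "\<phi>' t = p1 t - p1 0 - t * p2 0 - 3 * c * t\<^sup>2" for t
  define \<phi>'' where "\<phi>'' t = p2 t - p2 0 - 6 * c * t" for t
  have "((\<lambda>t. f (x + t *\<^sub>R s)) has_real_derivative p1 t) (at t)" if "0 \<le> t" "t \<le> 1" for t
    using has_real_derivative_along_line[OF gradient[OF inU[OF that]]]
    by (simp add: p1_def inner_commute)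
  then have d\<phi>: "(\<phi> has_real_derivative \<phi>' t) (at t)" if "0 \<le> t" "t \<le> 1" for t
    unfolding \<phi>_def[abs_def] \<phi>'_def using that
    by (auto intro!: derivative_eq_intros)
  have "(p1 has_real_derivative p2 t) (at t)" if "0 \<le> t" "t \<le> 1" for t
    unfolding p1_def p2_def by (rule has_real_derivative_inner_along_line[OF hessian[OF inU[OF that]]])
  then have d\<phi>': "(\<phi>' has_real_derivative \<phi>'' t) (at t)" if "0 \<le> t" "t \<le> 1" for t
    unfolding \<phi>'_def[abs_def] \<phi>''_def using that
    by (auto intro!: derivative_eq_intros)
  obtain \<tau> where \<tau>: "0 < \<tau>" "\<tau> < 1" "\<phi> 1 - \<phi> 0 = (1 - 0) * \<phi>' \<tau>"
    using MVT2[of 0 1 \<phi> \<phi>'] d\<phi> by auto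
  obtain \<tau>' where \<tau>': "0 < \<tau>'" "\<tau>' < \<tau>" "\<phi>' \<tau> - \<phi>' 0 = (\<tau> - 0) * \<phi>'' \<tau>'"
    using MVT2[of 0 \<tau> \<phi>' \<phi>''] d\<phi>' \<tau> by auto
  have "p2 \<tau>' - p2 0 \<le> LH * norm (x + \<tau>' *\<^sub>R s - x) * norm s * norm s"
    using H_lipschitz_inner[OF inU inU[of 0], of \<tau>' s s] \<tau> \<tau>' unfolding p2_def by simp
  also have "\<dots> = 6 * c * \<tau>'" using \<tau>' by (simp add: c_def power3_eq_cube)
  finally have "\<phi>'' \<tau>' \<le> 0" by (simp add: \<phi>''_def)
  then have "\<phi>' \<tau> \<le> 0" using \<tau> \<tau>' by (simp add: \<phi>'_def mult_nonneg_nonpos)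
  then have "\<phi> 1 \<le> 0" using \<tau> by (simp add: \<phi>_def)
  then show ?thesis by (simp add: \<phi>_def p1_def p2_def c_def inner_commute)
qed

lemma gradient_taylor_bound:
  assumes seg: "closed_segment x (x + s) \<subseteq> U"
  shows "norm (g (x + s) - g x - H x *v s) \<le> LH * (norm s)\<^sup>2"
proof -
  have inU: "\<And>t. 0 \<le> t \<Longrightarrow> t \<le> 1 \<Longrightarrow> x + t *\<^sub>R s \<in> U"
    using seg segment_point_in_closed_segment by blast
  define e where "e = g (x + s) - g x - H x *v s"
  define \<psi> where "\<psi> t = e \<bullet> g (x + t *\<^sub>R s) - t * (e \<bullet> (H x *v s))" for t
  define \<psi>' where "\<psi>' t = e \<bullet> (H (x + t *\<^sub>R s) *v s) - e \<bullet> (H x *v s)" for t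
  have "(\<psi> has_real_derivative \<psi>' t) (at t)" if "0 \<le> t" "t \<le> 1" for t
    unfolding \<psi>_def[abs_def] \<psi>'_def
    by (intro DERIV_diff has_real_derivative_inner_along_line hessian inU that)
      (auto intro!: derivative_eq_intros)
  then obtain \<tau> where \<tau>: "0 < \<tau>" "\<tau> < 1" "\<psi> 1 - \<psi> 0 = (1 - 0) * \<psi>' \<tau>"
    using MVT2[of 0 1 \<psi> \<psi>'] by auto
  have "(norm e)\<^sup>2 = \<psi> 1 - \<psi> 0"
    by (simp add: \<psi>_def e_def inner_diff_right power2_norm_eq_inner)
  also have "\<dots> \<le> LH * norm (\<tau> *\<^sub>R s) * norm e * norm s"
    using H_lipschitz_inner[OF inU inU[of 0], of \<tau> e s] \<tau> unfolding \<psi>'_def by simp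
  also have "\<dots> \<le> LH * norm s * norm e * norm s"
    using \<tau> LH_nonneg by (simp add: mult_left_le_one_le mult_right_mono mult_left_mono)
  finally have "norm e * norm e \<le> norm e * (LH * (norm s)\<^sup>2)"
    by (simp add: power2_eq_square algebra_simps)
  then have "norm e \<le> LH * (norm s)\<^sup>2"
    using LH_nonneg by (cases "norm e = 0") simp_all
  then show ?thesis by (simp add: e_def)
qed

lemma second_difference_eq:
  assumes ball: "ball x r \<subseteq> U" and uv: "norm u + norm v < r"
  obtains z where "z \<in> U" "norm (z - x) \<le> norm u + norm v"
    "f (x + u + v) - f (x + v) - f (x + u) + f x = v \<bullet> (H z *v u)"
proof -
  have dist_add_norm: "dist x (x + w) = norm w" for w by (simp add: dist_norm)
  have inU: "x + (a *\<^sub>R u + b *\<^sub>R v) \<in> U" if "0 \<le> a" "a \<le> 1" "0 \<le> b" "b \<le> 1" for a b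
  proof -
    have "dist x (x + (a *\<^sub>R u + b *\<^sub>R v)) < r" using uv norm_scaleR_add_scaleR_le[OF that, of u v] dist_add_norm by simp
    then show ?thesis using ball by auto
  qed
  define F where "F b = f (x + u + b *\<^sub>R v) - f (x + b *\<^sub>R v)" for b
  define F' where "F' b = g (x + u + b *\<^sub>R v) \<bullet> v - g (x + b *\<^sub>R v) \<bullet> v" for b
  have "(F has_real_derivative F' b) (at b)" if "0 \<le> b" "b \<le> 1" for b
    using inU[of 1 b] inU[of 0 b] that unfolding F_def[abs_def] F'_def
    by (intro DERIV_diff has_real_derivative_along_line gradient) (simp_all add: add.assoc)
  then obtain \<tau> where \<tau>: "0 < \<tau>" "\<tau> < 1" "F 1 - F 0 = (1 - 0) * F' \<tau>"
    using MVT2[of 0 1 F F'] by auto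
  define G where "G a = v \<bullet> g (x + \<tau> *\<^sub>R v + a *\<^sub>R u)" for a
  define G' where "G' a = v \<bullet> (H (x + \<tau> *\<^sub>R v + a *\<^sub>R u) *v u)" for a
  have "(G has_real_derivative G' a) (at a)" if "0 \<le> a" "a \<le> 1" for a
    using inU[of a \<tau>] that \<tau> unfolding G_def[abs_def] G'_def
    by (intro has_real_derivative_inner_along_line hessian) (simp add: algebra_simps)
  then obtain \<sigma> where \<sigma>: "0 < \<sigma>" "\<sigma> < 1" "G 1 - G 0 = (1 - 0) * G' \<sigma>"
    using MVT2[of 0 1 G G'] by auto
  show ?thesis
  proof
    show "x + \<tau> *\<^sub>R v + \<sigma> *\<^sub>R u \<in> U" using inU[of \<sigma> \<tau>] \<tau> \<sigma> by (simp add: algebra_simps)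
    show "norm (x + \<tau> *\<^sub>R v + \<sigma> *\<^sub>R u - x) \<le> norm u + norm v"
      using norm_scaleR_add_scaleR_le[of \<sigma> \<tau> u v] \<tau> \<sigma> by (simp add: algebra_simps)
    have "F 1 - F 0 = G 1 - G 0" using \<tau>(3) by (simp add: F'_def G_def inner_commute algebra_simps)
    then show "f (x + u + v) - f (x + v) - f (x + u) + f x = v \<bullet> (H (x + \<tau> *\<^sub>R v + \<sigma> *\<^sub>R u) *v u)"
      using \<sigma>(3) by (simp add: F_def G'_def)
  qed
qed

(* H is not assumed symmetric: compare the two mixed second differences of f, which
   Lipschitz continuity of H ties to H x up to O(t^3). *)
lemma hessian_symmetric:
  assumes xU: "x \<in> U"
  shows "(H x *v u) \<bullet> v = u \<bullet> (H x *v v)"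
proof -
  obtain r where r: "r > 0" "ball x r \<subseteq> U" using open_U xU by (meson openE)
  define N where "N = norm u + norm v"
  have "\<bar>v \<bullet> (H x *v u) - u \<bullet> (H x *v v)\<bar> \<le> (2 * LH * N * norm u * norm v) * t"
    if t: "0 < t" "t < r / (N + 1)" for t
  proof -
    have N: "N \<ge> 0" by (simp add: N_def)
    then have "t * (N + 1) < r" using t(2) by (simp add: less_divide_eq add_nonneg_pos)
    then have tN: "t * N < r" using t(1) by (simp add: algebra_simps)
    have Lip: "LH * d * norm a * norm b \<le> LH * (t * N) * norm a * norm b" if "d \<le> t * N" for d a b
      using that LH_nonneg by (intro mult_right_mono mult_left_mono) auto
    have tn: "norm (t *\<^sub>R u) + norm (t *\<^sub>R v) = t * N" using t by (simp add: N_def algebra_simps)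
    obtain z1 where z1: "z1 \<in> U" "norm (z1 - x) \<le> t * N"
      "f (x + t *\<^sub>R u + t *\<^sub>R v) - f (x + t *\<^sub>R v) - f (x + t *\<^sub>R u) + f x = (t *\<^sub>R v) \<bullet> (H z1 *v (t *\<^sub>R u))"
      using second_difference_eq[OF r(2), of "t *\<^sub>R u" "t *\<^sub>R v"] tn tN by auto
    obtain z2 where z2: "z2 \<in> U" "norm (z2 - x) \<le> t * N"
      "f (x + t *\<^sub>R v + t *\<^sub>R u) - f (x + t *\<^sub>R u) - f (x + t *\<^sub>R v) + f x = (t *\<^sub>R u) \<bullet> (H z2 *v (t *\<^sub>R v))"
      using second_difference_eq[OF r(2), of "t *\<^sub>R v" "t *\<^sub>R u"] tn tN by (auto simp: add.commute)
    have "t\<^sup>2 * (v \<bullet> (H z1 *v u)) = t\<^sup>2 * (u \<bullet> (H z2 *v v))"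
      using z1(3) z2(3) by (simp add: matrix_vector_mult_scaleR power2_eq_square algebra_simps)
    then have z12: "v \<bullet> (H z1 *v u) = u \<bullet> (H z2 *v v)" using t by simp
    have "\<bar>v \<bullet> (H x *v u) - v \<bullet> (H z1 *v u)\<bar> \<le> LH * (t * N) * norm v * norm u"
      using z1(2) by (intro order_trans[OF H_lipschitz_inner[OF xU z1(1)] Lip]) (simp add: norm_minus_commute)
    moreover have "\<bar>u \<bullet> (H z2 *v v) - u \<bullet> (H x *v v)\<bar> \<le> LH * (t * N) * norm u * norm v"
      using z2(2) by (intro order_trans[OF H_lipschitz_inner[OF z2(1) xU] Lip])
    ultimately show ?thesis using z12 by (simp add: algebra_simps)
  qed
  moreover have "r / (N + 1) > 0" using r by (simp add: N_def add_nonneg_pos)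
  ultimately show ?thesis by (metis zero_if_abs_le_linear eq_iff_diff_eq_0 inner_commute)
qed

end

section \<open>Counting successful iterations\<close>

(* min d0 (c1 e) is the lower bound on the trust-region radius. *)
lemma boundary_decrease_arith:
  fixes e d0 c1 C m :: real
  assumes e: "e > 0" and d0: "d0 > 0" and c1: "c1 > 0"
    and C: "C \<ge> 1 / d0\<^sup>2" "C \<ge> 1 / c1\<^sup>2" and m: "m \<ge> 1 / e" "m \<ge> 1 / e ^ 3"
  shows "1 \<le> e * (min d0 (c1 * e))\<^sup>2 * (C * m)"
proof (cases "d0 \<le> c1 * e")
  case True
  have "1 \<le> C * d0\<^sup>2" "1 \<le> m * e" using C m e d0 by (simp_all add: field_simps)
  then have "1 * 1 \<le> (C * d0\<^sup>2) * (m * e)" by (intro mult_mono) auto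
  then show ?thesis using True by (simp add: algebra_simps)
next
  case False
  have "1 \<le> C * c1\<^sup>2" "1 \<le> m * e ^ 3" using C m e c1 by (simp_all add: field_simps)
  then have "1 * 1 \<le> (C * c1\<^sup>2) * (m * e ^ 3)" by (intro mult_mono) auto
  then show ?thesis using False by (simp add: power2_eq_square power3_eq_cube algebra_simps)
qed

(* The hypothesis on eg bounds the gradient after an interior step of length a. *)
lemma interior_decrease_arith:
  fixes e eg a L C m :: real
  assumes e: "e > 0" and eg: "eg > 0" and a: "a \<ge> 0" and L: "L > 0" and C: "C \<ge> 7 + 2 * L"
    and m: "m \<ge> e / eg\<^sup>2" "m \<ge> 1 / e ^ 3" and grad: "eg < 5/2 * e * a + L * a\<^sup>2"
  shows "1 \<le> e * a\<^sup>2 * (8 * C * m)"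
proof -
  have "1 / e ^ 3 > 0" using e by simp
  then have m0: "m > 0" using m(2) by linarith
  consider "eg \<le> 2 * L * a\<^sup>2" | "2 * L * a\<^sup>2 < eg" by linarith
  then show ?thesis
  proof cases
    case 1
    have "eg \<le> C * a\<^sup>2"
      using 1 mult_right_mono[of "2 * L" C "a\<^sup>2"] C L by simp
    have "1 \<le> 8 * e * eg * m"
    proof (cases "eg \<le> e\<^sup>2")
      case True
      have "1 \<le> 8 * e * eg * (e / eg\<^sup>2)" using True e eg by (simp add: power2_eq_square field_simps)
      also have "\<dots> \<le> 8 * e * eg * m" using m(1) e eg by (intro mult_left_mono) auto
      finally show ?thesis .
    next
      case False
      have "1 \<le> 8 * e * eg * (1 / e ^ 3)" using False e eg by (simp add: power2_eq_square power3_eq_cube field_simps)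
      also have "\<dots> \<le> 8 * e * eg * m" using m(2) e eg by (intro mult_left_mono) auto
      finally show ?thesis .
    qed
    also have "8 * e * eg * m \<le> 8 * e * (C * a\<^sup>2) * m"
      using \<open>eg \<le> C * a\<^sup>2\<close> e m0 by (simp add: mult_left_mono mult_right_mono)
    also have "\<dots> = e * a\<^sup>2 * (8 * C * m)" by simp
    finally show ?thesis .
  next
    case 2
    then have "eg < 5 * (e * a)" using grad by simp
    then have "eg\<^sup>2 < (5 * (e * a))\<^sup>2" using eg by (intro power_strict_mono) auto
    then have "eg\<^sup>2 < 25 * (e * a)\<^sup>2" by (simp add: power_mult_distrib)
    then have "eg\<^sup>2 \<le> 56 * (e * a)\<^sup>2" using zero_le_power2[of "e * a"] by linarith
    then have "1 \<le> 56 * (e * a)\<^sup>2 / eg\<^sup>2" using eg by simp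
    also have "\<dots> = 7 * e * a\<^sup>2 * (8 * (e / eg\<^sup>2))" by (simp add: power2_eq_square)
    also have "\<dots> \<le> e * a\<^sup>2 * (8 * C * m)"
    proof -
      have "7 * (e / eg\<^sup>2) \<le> C * m" using C m(1) e L by (intro mult_mono) auto
      then have "(8 * e * a\<^sup>2) * (7 * (e / eg\<^sup>2)) \<le> (8 * e * a\<^sup>2) * (C * m)"
        using e by (intro mult_left_mono) auto
      then show ?thesis by (simp only: mult_ac)
    qed
    finally show ?thesis .
  qed
qed

lemma finite_card_le_if_prefix_card_le:
  fixes S :: "nat set"
  assumes prefix: "\<And>N. real (card (S \<inter> {..<N})) \<le> B"
  shows "finite S" "real (card S) \<le> B"
proof -
  show fin: "finite S"
  proof (rule ccontr)
    assume "infinite S"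
    obtain n :: nat where n: "real n > B" using reals_Archimedean2 by blast
    obtain F where F: "finite F" "card F = n" "F \<subseteq> S"
      using infinite_arbitrarily_large[OF \<open>infinite S\<close>] by blast
    then have "F \<subseteq> S \<inter> {..<Suc (Max (insert 0 F))}" by (auto simp: less_Suc_eq_le)
    then have "n \<le> card (S \<inter> {..<Suc (Max (insert 0 F))})" using F by (metis card_mono finite_Int finite_lessThan)
    then have "real n \<le> B" using prefix by (meson of_nat_le_iff order_trans)
    then show False using n by simp
  qed
  have "S \<inter> {..<Suc (Max (insert 0 S))} = S" using fin by (auto simp: less_Suc_eq_le)
  then show "real (card S) \<le> B" using prefix by metis
qed

locale trust_region_run = lipschitz_hessian f g H U LH
  for f :: "real^'n \<Rightarrow> real" and g H U LH +
  fixes x s :: "nat \<Rightarrow> real^'n" and \<delta> :: "nat \<Rightarrow> real" and mo :: "nat \<Rightarrow> (real^'n) option"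
    and epsg epsH \<gamma>1 \<gamma>2 \<psi> \<delta>0 \<delta>max \<eta> zeta M flow :: real and capCG :: bool
  assumes LH_pos: "LH > 0" and epsg_pos: "epsg > 0" and epsH_pos: "epsH > 0"
    and \<gamma>1_pos: "\<gamma>1 > 0" and \<gamma>2_ge: "\<gamma>2 \<ge> 1" and \<delta>0_pos: "\<delta>0 > 0" and \<delta>max_ge: "\<delta>max \<ge> \<delta>0"
    and \<eta>: "0 < \<eta>" "\<eta> < 1" and zeta: "0 \<le> zeta" "zeta \<le> 1"
    and init: "\<delta> 0 = \<delta>0"
    and run: "alg4_run f g H epsg epsH \<gamma>1 \<gamma>2 \<psi> \<delta>max \<eta> zeta capCG M x \<delta> s mo"
    and segs: "\<And>k. k \<in> alg4_K g H epsg epsH zeta capCG M x \<delta> mo \<Longrightarrow>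
                 closed_segment (x k) (x k + s k) \<subseteq> U"
    and bdd: "\<And>k. (\<forall>j<k. \<not> alg4_terminates g H epsg epsH zeta capCG M x \<delta> mo j) \<Longrightarrow> f (x k) \<ge> flow"
begin

abbreviation "terminated j \<equiv> alg4_terminates g H epsg epsH zeta capCG M x \<delta> mo j"
abbreviation "K \<equiv> alg4_K g H epsg epsH zeta capCG M x \<delta> mo"
abbreviation "S \<equiv> alg4_S f g H epsg epsH \<eta> zeta capCG M x \<delta> s mo"
abbreviation "calls_meo k \<equiv> alg4_calls_meo g H epsg epsH zeta capCG M x \<delta> k"
abbreviation "cg_out k \<equiv> alg4_cg g H epsH zeta capCG M x \<delta> k"
abbreviation "\<rho> k \<equiv> alg4_rho f g H x s k"
abbreviation "md k \<equiv> model_decrease (g (x k)) (H (x k)) (s k)"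

lemma mem_K_iff: "k \<in> K \<longleftrightarrow> (\<forall>j\<le>k. \<not> terminated j)"
  by (simp add: alg4_K_def)

lemma x_in_U: "k \<in> K \<Longrightarrow> x k \<in> U"
  using segs ends_in_segment(1) by blast

lemma run_update: "k \<in> K \<Longrightarrow>
    s k = (if calls_meo k then the (mo k) else fst (cg_out k)) \<and>
    (if \<rho> k \<ge> \<eta> then
       x (Suc k) = x k + s k \<and>
       \<delta> (Suc k) = (if norm (s k) \<ge> \<psi> * \<delta> k then min (\<gamma>2 * \<delta> k) \<delta>max else \<delta> k)
     else x (Suc k) = x k \<and> \<delta> (Suc k) = \<gamma>1 * norm (s k))"
  using run unfolding alg4_run_def by blast

lemma run_meo: "k \<in> K \<Longrightarrow> calls_meo k \<Longrightarrow> meo_spec (g (x k)) (H (x k)) epsH (\<delta> k) (mo k)"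
  using run unfolding alg4_run_def alg4_K_def by auto

lemma tcg_input_at:
  "k \<in> K \<Longrightarrow> \<delta> k > 0 \<Longrightarrow> g (x k) \<noteq> 0 \<Longrightarrow> tcg_input (g (x k)) (H (x k)) epsH (\<delta> k) zeta"
  using hessian_symmetric[OF x_in_U] epsH_pos zeta by unfold_locales auto

definition interior_step :: "nat \<Rightarrow> bool" where
  "interior_step k \<longleftrightarrow> \<not> calls_meo k \<and> snd (cg_out k) = INT_RES"

lemma not_interior_stepD:
  assumes k: "k \<in> K" and \<delta>: "\<delta> k > 0" and bnd: "\<not> interior_step k"
  shows "norm (s k) = \<delta> k \<and> epsH / 4 * (\<delta> k)\<^sup>2 \<le> md k"
proof (cases "calls_meo k")
  case True
  then obtain sm where "mo k = Some sm"
    using k by (cases "mo k") (auto simp: mem_K_iff alg4_terminates_def)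
  then show ?thesis
    using run_meo[OF k True] run_update[OF k] True meo_step[of "g (x k)" "H (x k)" epsH "\<delta> k" sm]
    by auto
next
  case False
  then have out: "snd (cg_out k) \<in> {BND_NEG, BND_NORM}"
    using bnd by (auto simp: interior_step_def alg4_calls_meo_def Let_def)
  then have "g (x k) \<noteq> 0" by (auto simp: alg4_cg_def)
  then interpret tcg_input "g (x k)" "H (x k)" epsH "\<delta> k" zeta
    using tcg_input_at k \<delta> by blast
  have "cg_out k = tcg (g (x k)) (H (x k)) epsH (\<delta> k) zeta capCG M" "s k = fst (cg_out k)"
    using \<open>g (x k) \<noteq> 0\<close> run_update[OF k] False by (auto simp: alg4_cg_def)
  moreover have "epsH / 4 * (\<delta> k)\<^sup>2 \<le> epsH / 2 * (\<delta> k)\<^sup>2" using epsH_pos by simp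
  ultimately show ?thesis
    using tcg_boundary out by fastforce
qed

lemma interior_stepD:
  assumes k: "k \<in> K" and \<delta>: "\<delta> k > 0" and int: "interior_step k"
  shows "epsg < norm (g (x k))" "epsH * (norm (s k))\<^sup>2 < md k"
    and "norm (g (x k) + H (x k) *v s k + (2 * epsH) *\<^sub>R s k) \<le> epsH / 2 * norm (s k)"
proof -
  show "epsg < norm (g (x k))"
    using int by (auto simp: interior_step_def alg4_calls_meo_def Let_def)
  then have "g (x k) \<noteq> 0" using epsg_pos by auto
  then interpret tcg_input "g (x k)" "H (x k)" epsH "\<delta> k" zeta
    using tcg_input_at k \<delta> by blast
  have "cg_out k = tcg (g (x k)) (H (x k)) epsH (\<delta> k) zeta capCG M" "s k = fst (cg_out k)"
    using \<open>g (x k) \<noteq> 0\<close> run_update[OF k] int by (auto simp: alg4_cg_def interior_step_def)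
  then show "epsH * (norm (s k))\<^sup>2 < md k"
    and "norm (g (x k) + H (x k) *v s k + (2 * epsH) *\<^sub>R s k) \<le> epsH / 2 * norm (s k)"
    using tcg_interior int by (auto simp: interior_step_def)
qed

lemma model_decrease_lower:
  assumes "k \<in> K" "\<delta> k > 0"
  shows "0 < md k" "epsH / 4 * (norm (s k))\<^sup>2 \<le> md k"
proof -
  have "epsH / 4 * (norm (s k))\<^sup>2 \<le> md k \<and> 0 < md k"
  proof (cases "interior_step k")
    case True
    moreover have "epsH / 4 * (norm (s k))\<^sup>2 \<le> epsH * (norm (s k))\<^sup>2" "0 \<le> epsH * (norm (s k))\<^sup>2"
      using epsH_pos by simp_all
    ultimately show ?thesis using interior_stepD(2)[OF assms] by linarith
  next
    case False
    moreover have "0 < epsH / 4 * (\<delta> k)\<^sup>2" using epsH_pos assms(2) by simp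
    ultimately show ?thesis using not_interior_stepD[OF assms] by auto
  qed
  then show "0 < md k" "epsH / 4 * (norm (s k))\<^sup>2 \<le> md k" by auto
qed

lemma f_decrease_lower: "k \<in> K \<Longrightarrow> md k - LH / 6 * norm (s k) ^ 3 \<le> f (x k) - f (x k + s k)"
  using cubic_upper_bound[OF segs, of k] by (simp add: model_decrease_def)

lemma unsuccessful_step_long:
  assumes k: "k \<in> K" and \<delta>: "\<delta> k > 0" and unsucc: "\<not> \<eta> \<le> \<rho> k"
  shows "3 * (1 - \<eta>) * epsH / (2 * LH) < norm (s k)"
proof (rule ccontr)
  assume "\<not> ?thesis"
  then have "LH * norm (s k) \<le> 3 * (1 - \<eta>) * epsH / 2" using LH_pos by (simp add: field_simps)
  then have "(LH * norm (s k)) * (norm (s k))\<^sup>2 \<le> (3 * (1 - \<eta>) * epsH / 2) * (norm (s k))\<^sup>2"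
    by (rule mult_right_mono) simp
  then have "LH / 6 * norm (s k) ^ 3 \<le> (1 - \<eta>) * (epsH / 4 * (norm (s k))\<^sup>2)"
    by (simp add: power2_eq_square power3_eq_cube algebra_simps)
  also have "\<dots> \<le> (1 - \<eta>) * md k"
    using model_decrease_lower[OF k \<delta>] \<eta> by (intro mult_left_mono) auto
  finally have "\<eta> * md k \<le> f (x k) - f (x k + s k)" using f_decrease_lower[OF k] by (simp add: algebra_simps)
  then show False
    using unsucc model_decrease_lower[OF k \<delta>] by (simp add: alg4_rho_def pos_le_divide_eq)
qed

lemma successful_step:
  assumes k: "k \<in> K" and \<delta>: "\<delta> k > 0" and succ: "\<eta> \<le> \<rho> k"
  shows "x (Suc k) = x k + s k" "\<eta> * md k \<le> f (x k) - f (x (Suc k))"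
proof -
  show x: "x (Suc k) = x k + s k" using run_update[OF k] succ by simp
  show "\<eta> * md k \<le> f (x k) - f (x (Suc k))"
    using succ model_decrease_lower[OF k \<delta>] by (simp add: x alg4_rho_def pos_le_divide_eq)
qed

definition radius_floor :: real where
  "radius_floor = min \<delta>0 (\<gamma>1 * (3 * (1 - \<eta>) * epsH / (2 * LH)))"

lemma radius_floor_pos: "radius_floor > 0"
  using \<delta>0_pos \<gamma>1_pos \<eta> epsH_pos LH_pos by (simp add: radius_floor_def)

lemma radius_lower_bound: "k \<in> K \<Longrightarrow> radius_floor \<le> \<delta> k"
proof (induction k)
  case 0
  then show ?case by (simp add: init radius_floor_def)
next
  case (Suc k)
  then have k: "k \<in> K" by (simp add: mem_K_iff)
  then have "radius_floor \<le> \<delta> k" using Suc.IH by simp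
  then have \<delta>: "\<delta> k > 0" using radius_floor_pos by linarith
  show ?case
  proof (cases "\<eta> \<le> \<rho> k")
    case True
    have "\<delta> k \<le> \<gamma>2 * \<delta> k" using mult_right_mono[of 1 \<gamma>2 "\<delta> k"] \<gamma>2_ge \<delta> by simp
    moreover have "radius_floor \<le> \<delta>max" using \<delta>max_ge by (simp add: radius_floor_def min.coboundedI1)
    ultimately have "radius_floor \<le> min (\<gamma>2 * \<delta> k) \<delta>max"
      using \<open>radius_floor \<le> \<delta> k\<close> by simp
    then show ?thesis using run_update[OF k] True \<open>radius_floor \<le> \<delta> k\<close> by auto
  next
    case False
    then have "\<gamma>1 * (3 * (1 - \<eta>) * epsH / (2 * LH)) \<le> \<gamma>1 * norm (s k)"
      using unsuccessful_step_long[OF k \<delta> False] \<gamma>1_pos by (intro mult_left_mono) auto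
    then show ?thesis using run_update[OF k] False by (simp add: radius_floor_def)
  qed
qed

lemma radius_pos: "k \<in> K \<Longrightarrow> \<delta> k > 0"
  using radius_lower_bound radius_floor_pos by (metis order_less_le_trans)

definition C_S :: real where
  "C_S = max (1 / \<delta>0\<^sup>2) (max (4 * LH\<^sup>2 / (9 * \<gamma>1\<^sup>2 * (1 - \<eta>)\<^sup>2)) (7 + 2 * LH))"

definition eps_factor :: real where
  "eps_factor = max (1 / epsH) (max (epsH / epsg\<^sup>2) (1 / epsH ^ 3))"

definition min_decrease :: real where
  "min_decrease = \<eta> / (8 * C_S * eps_factor)"

lemma C_S_pos: "C_S > 0"
proof -
  have "7 + 2 * LH \<le> C_S" by (simp add: C_S_def)
  then show ?thesis using LH_pos by linarith
qed

lemma eps_factor_pos: "eps_factor > 0"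
proof -
  have "1 / epsH \<le> eps_factor" by (simp add: eps_factor_def)
  moreover have "1 / epsH > 0" using epsH_pos by simp
  ultimately show ?thesis by linarith
qed

lemma min_decrease_pos: "min_decrease > 0"
  using C_S_pos eps_factor_pos \<eta> by (simp add: min_decrease_def)

lemma boundary_successful_decrease:
  assumes k: "k \<in> K" and succ: "\<eta> \<le> \<rho> k" and bnd: "\<not> interior_step k"
  shows "2 * min_decrease \<le> f (x k) - f (x (Suc k))"
proof -
  define c1 where "c1 = \<gamma>1 * 3 * (1 - \<eta>) / (2 * LH)"
  have c1: "c1 > 0" using \<gamma>1_pos \<eta> LH_pos by (simp add: c1_def)
  have floor: "radius_floor = min \<delta>0 (c1 * epsH)"
    by (simp add: radius_floor_def c1_def field_simps)
  have "1 / c1\<^sup>2 = 4 * LH\<^sup>2 / (9 * \<gamma>1\<^sup>2 * (1 - \<eta>)\<^sup>2)"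
    by (simp add: c1_def power2_eq_square field_simps)
  then have "1 \<le> epsH * radius_floor\<^sup>2 * (C_S * eps_factor)"
    unfolding floor using epsH_pos \<delta>0_pos c1
    by (intro boundary_decrease_arith) (auto simp: C_S_def eps_factor_def)
  also have "\<dots> \<le> epsH * (\<delta> k)\<^sup>2 * (C_S * eps_factor)"
    using radius_lower_bound[OF k] radius_floor_pos epsH_pos C_S_pos eps_factor_pos
    by (intro mult_right_mono mult_left_mono power_mono) auto
  finally have "2 * min_decrease \<le> \<eta> * (epsH / 4 * (\<delta> k)\<^sup>2)"
    using \<eta> C_S_pos eps_factor_pos by (simp add: min_decrease_def field_simps)
  also have "\<dots> \<le> \<eta> * md k"
    using not_interior_stepD[OF k radius_pos[OF k] bnd] \<eta> by (intro mult_left_mono) auto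
  also have "\<dots> \<le> f (x k) - f (x (Suc k))"
    using successful_step[OF k radius_pos[OF k] succ] by simp
  finally show ?thesis .
qed

lemma interior_successful_decrease:
  assumes k: "k \<in> K" and succ: "\<eta> \<le> \<rho> k" and int: "interior_step k"
  shows "\<eta> * (epsH * (norm (s k))\<^sup>2) \<le> f (x k) - f (x (Suc k))"
    and "epsg < norm (g (x (Suc k))) \<Longrightarrow> min_decrease \<le> f (x k) - f (x (Suc k))"
proof -
  note step = interior_stepD[OF k radius_pos[OF k] int]
  note succ_step = successful_step[OF k radius_pos[OF k] succ]
  define a where "a = norm (s k)"
  show decr: "\<eta> * (epsH * (norm (s k))\<^sup>2) \<le> f (x k) - f (x (Suc k))"
    using step(2) succ_step(2) \<eta> mult_left_mono[of "epsH * (norm (s k))\<^sup>2" "md k" \<eta>] by linarith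
  assume big: "epsg < norm (g (x (Suc k)))"
  define r where "r = g (x k) + H (x k) *v s k + (2 * epsH) *\<^sub>R s k"
  define e where "e = g (x k + s k) - g (x k) - H (x k) *v s k"
  have g_next: "g (x k + s k) = r - (2 * epsH) *\<^sub>R s k + e" by (simp add: r_def e_def)
  have "norm (g (x k + s k)) \<le> norm r + norm ((2 * epsH) *\<^sub>R s k) + norm e"
    unfolding g_next
    using norm_triangle_ineq[of "r - (2 * epsH) *\<^sub>R s k" e]
      norm_triangle_ineq4[of r "(2 * epsH) *\<^sub>R s k"]
    by linarith
  also have "\<dots> \<le> epsH / 2 * a + 2 * epsH * a + LH * a\<^sup>2"
    using step(3) gradient_taylor_bound[OF segs[OF k]] epsH_pos by (simp add: a_def r_def e_def)
  finally have "epsg < 5/2 * epsH * a + LH * a\<^sup>2"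
    using big succ_step(1) by (simp add: algebra_simps)
  then have "1 \<le> epsH * a\<^sup>2 * (8 * C_S * eps_factor)"
    using epsg_pos epsH_pos LH_pos
    by (intro interior_decrease_arith) (auto simp: a_def C_S_def eps_factor_def)
  then have "min_decrease \<le> \<eta> * (epsH * a\<^sup>2)"
    using \<eta> C_S_pos eps_factor_pos by (simp add: min_decrease_def field_simps)
  then show "min_decrease \<le> f (x k) - f (x (Suc k))" using decr by (simp add: a_def)
qed

(* An accepted interior step may decrease f very little, but then the new gradient is small;
   the bonus min_decrease for a small gradient pays for such steps. *)
definition potential :: "nat \<Rightarrow> real" where
  "potential k = f (x k) - (if norm (g (x k)) \<le> epsg then min_decrease else 0)"

lemma potential_decrease:
  assumes k: "k \<in> K"
  shows "(if \<eta> \<le> \<rho> k then min_decrease else 0) \<le> potential k - potential (Suc k)"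
proof (cases "\<eta> \<le> \<rho> k")
  case False
  then show ?thesis using run_update[OF k] by (simp add: potential_def)
next
  case succ: True
  have "potential (Suc k) \<le> f (x (Suc k))" using min_decrease_pos by (simp add: potential_def)
  show ?thesis
  proof (cases "interior_step k")
    case True
    have "epsg < norm (g (x k))" using interior_stepD(1)[OF k radius_pos[OF k] True] .
    then have Pk: "potential k = f (x k)" by (simp add: potential_def)
    show ?thesis
    proof (cases "norm (g (x (Suc k))) \<le> epsg")
      case True
      have "0 \<le> \<eta> * (epsH * (norm (s k))\<^sup>2)" using \<eta> epsH_pos by simp
      then show ?thesis
        using interior_successful_decrease(1)[OF k succ \<open>interior_step k\<close>] Pk True succ
        by (simp add: potential_def)
    next
      case False
      then show ?thesis
        using interior_successful_decrease(2)[OF k succ \<open>interior_step k\<close>] Pk succ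
        by (simp add: potential_def)
    qed
  next
    case False
    have "f (x k) - min_decrease \<le> potential k" using min_decrease_pos by (simp add: potential_def)
    then show ?thesis
      using boundary_successful_decrease[OF k succ False] \<open>potential (Suc k) \<le> f (x (Suc k))\<close> succ
      by simp
  qed
qed

lemma potential_telescope:
  "(\<forall>j<N. \<not> terminated j) \<Longrightarrow> min_decrease * card (S \<inter> {..<N}) \<le> potential 0 - potential N"
proof (induction N)
  case 0
  then show ?case by simp
next
  case (Suc N)
  have N: "N \<in> K" using Suc.prems by (simp add: mem_K_iff)
  show ?case
  proof (cases "\<eta> \<le> \<rho> N")
    case True
    then have "S \<inter> {..<Suc N} = insert N (S \<inter> {..<N})" using N by (auto simp: alg4_S_def)
    then have "card (S \<inter> {..<Suc N}) = Suc (card (S \<inter> {..<N}))" by simp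
    then show ?thesis using Suc potential_decrease[OF N] True by (simp add: algebra_simps)
  next
    case False
    then have "S \<inter> {..<Suc N} = S \<inter> {..<N}" by (auto simp: alg4_S_def less_Suc_eq)
    then show ?thesis using Suc potential_decrease[OF N] False by simp
  qed
qed

lemma card_S_prefix_le:
  "real (card (S \<inter> {..<N})) \<le> 8 * (f (x 0) - flow) / \<eta> * C_S * eps_factor + 1"
proof -
  have bound: "real (card (S \<inter> {..<N})) \<le> 8 * (f (x 0) - flow) / \<eta> * C_S * eps_factor + 1"
    if N: "\<forall>j<N. \<not> terminated j" for N
  proof -
    have "potential 0 \<le> f (x 0)" "f (x N) - min_decrease \<le> potential N"
      using min_decrease_pos by (simp_all add: potential_def)
    moreover have "flow \<le> f (x N)" using bdd N by blast
    ultimately have "min_decrease * card (S \<inter> {..<N}) \<le> f (x 0) - flow + min_decrease"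
      using potential_telescope[OF N] by linarith
    then have "real (card (S \<inter> {..<N})) \<le> (f (x 0) - flow + min_decrease) / min_decrease"
      using min_decrease_pos by (simp add: pos_le_divide_eq mult.commute[of min_decrease])
    also have "\<dots> = (f (x 0) - flow) / min_decrease + 1"
      using min_decrease_pos by (simp add: add_divide_distrib)
    also have "(f (x 0) - flow) / min_decrease = 8 * (f (x 0) - flow) / \<eta> * C_S * eps_factor"
      by (simp add: min_decrease_def mult_ac)
    finally show ?thesis .
  qed
  show ?thesis
  proof (cases "\<exists>j<N. terminated j")
    case True
    then obtain t where "terminated t" "\<forall>j<t. \<not> terminated j"
      using exists_least_iff[of "\<lambda>j. terminated j"] by blast
    moreover have "S \<inter> {..<N} \<subseteq> S \<inter> {..<t}"
    proof (intro subsetI IntI)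
      fix k assume "k \<in> S \<inter> {..<N}"
      then have "\<forall>j\<le>k. \<not> terminated j" by (simp add: alg4_S_def mem_K_iff)
      then show "k \<in> {..<t}" using \<open>terminated t\<close> by (meson lessThan_iff not_le)
    qed auto
    then have "card (S \<inter> {..<N}) \<le> card (S \<inter> {..<t})" by (intro card_mono) auto
    ultimately show ?thesis using bound[of t] by (meson of_nat_le_iff order_trans)
  next
    case False
    then show ?thesis using bound by blast
  qed
qed

lemma card_S_le:
  "finite S \<and> real (card S) \<le> of_int \<lfloor>8 * (f (x 0) - flow) / \<eta> * C_S * eps_factor\<rfloor> + 1"
proof -
  have "finite S" "real (card S) \<le> 8 * (f (x 0) - flow) / \<eta> * C_S * eps_factor + 1"
    using finite_card_le_if_prefix_card_le[OF card_S_prefix_le] by auto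
  moreover from this(2) have "int (card S) - 1 \<le> \<lfloor>8 * (f (x 0) - flow) / \<eta> * C_S * eps_factor\<rfloor>"
    by (simp add: le_floor_iff)
  then have "real (card S) \<le> of_int \<lfloor>8 * (f (x 0) - flow) / \<eta> * C_S * eps_factor\<rfloor> + 1"
    by linarith
  ultimately show ?thesis by blast
qed

end

theorem lemma4p4:
  fixes f :: "real^'n \<Rightarrow> real" and g :: "real^'n \<Rightarrow> real^'n" and H :: "real^'n \<Rightarrow> real^'n^'n"
    and x s :: "nat \<Rightarrow> real^'n" and \<delta> :: "nat \<Rightarrow> real" and mo :: "nat \<Rightarrow> (real^'n) option"
    and epsg epsH \<gamma>1 \<gamma>2 \<psi> \<delta>0 \<delta>max \<eta> zeta \<xi> M Lg LH flow :: real and capCG :: bool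
    and U :: "(real^'n) set"
  assumes params: "epsg > 0" "epsH > 0" "0 < \<gamma>1" "\<gamma>1 < 1" "\<gamma>2 \<ge> 1"
      "1 / \<gamma>2 < \<psi>" "\<psi> \<le> 1" "\<delta>0 > 0" "\<delta>max \<ge> \<delta>0" "0 < \<eta>" "\<eta> < 1"
      "0 < zeta" "zeta < 1" "0 \<le> \<xi>" "\<xi> < 1" "M \<ge> Lg"
    and init: "\<delta> 0 = \<delta>0"
    and run: "alg4_run f g H epsg epsH \<gamma>1 \<gamma>2 \<psi> \<delta>max \<eta> zeta capCG M x \<delta> s mo"
    and U_open: "open U"
    and grad: "\<And>y. y \<in> U \<Longrightarrow> (f has_derivative (\<lambda>h. g y \<bullet> h)) (at y)"
    and hess: "\<And>y. y \<in> U \<Longrightarrow> (g has_derivative (\<lambda>h. H y *v h)) (at y)"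
    and hess_cont: "continuous_on U H"
    and Lg_pos: "Lg > 0" and LH_pos: "LH > 0"
    and g_lip: "\<And>y z. y \<in> U \<Longrightarrow> z \<in> U \<Longrightarrow> norm (g y - g z) \<le> Lg * norm (y - z)"
    and H_lip: "\<And>y z. y \<in> U \<Longrightarrow> z \<in> U \<Longrightarrow> onorm (\<lambda>v. (H y - H z) *v v) \<le> LH * norm (y - z)"
    and segs: "\<And>k. k \<in> alg4_K g H epsg epsH zeta capCG M x \<delta> mo \<Longrightarrow>
                 closed_segment (x k) (x k + s k) \<subseteq> U"
    and bdd: "\<And>k. (\<forall>j<k. \<not> alg4_terminates g H epsg epsH zeta capCG M x \<delta> mo j) \<Longrightarrow> f (x k) \<ge> flow"
  shows "finite (alg4_S f g H epsg epsH \<eta> zeta capCG M x \<delta> s mo) \<and>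
         real (card (alg4_S f g H epsg epsH \<eta> zeta capCG M x \<delta> s mo))
           \<le> of_int \<lfloor>(8 * (f (x 0) - flow) / \<eta>
                   * max (1 / \<delta>0\<^sup>2) (max (4 * LH\<^sup>2 / (9 * \<gamma>1\<^sup>2 * (1 - \<eta>)\<^sup>2)) (7 + 2 * LH)))
                  * max (1 / epsH) (max (epsH / epsg\<^sup>2) (1 / epsH ^ 3))\<rfloor> + 1"
proof -
  interpret trust_region_run f g H U LH x s \<delta> mo epsg epsH \<gamma>1 \<gamma>2 \<psi> \<delta>0 \<delta>max \<eta> zeta M flow capCG
    using params init run U_open grad hess LH_pos H_lip segs bdd by unfold_locales auto
  show ?thesis using card_S_le unfolding C_S_def eps_factor_def .
qed

end
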